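(* Let $[x]t$ be a normal planar term (NPT) with $R$-coloring $\pi$. Then exactly one of the following cases holds: (i) $[x]t$ is the identity term ($t=x$) and $|\pi| = |\mathrm{ONH}(\pi)| = 1$; (ii) $[x]t = \mathrm{FO}([x_1]t_1,[x_2]t_2)$ for some NPTs $[x_1]t_1$ and $[x_2]t_2$ with $R$-colorings $\pi_1,\pi_2$ such that $|\pi| = |\pi_1|+|\pi_2|$ and $|\mathrm{ONH}(\pi)| = 1 + |\mathrm{ONH}(\pi_1)| + |\mathrm{ONH}(\pi_2)|$; (iii) $[x]t = \mathrm{VO}_k([x_1]t_1)$ for some NPT $[x_1]t_1$ with $R$-coloring $\pi_1$ and some $1\le k\le |\mathrm{ONH}(\pi_1)|$ such that $|\pi| = 1+|\pi_1|$ and $|\mathrm{ONH}(\pi)| = k+1$.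
   Context: Lambda skeletons: graded sets $\mathrm{SLam}(i)$, least such that $\_ \in \mathrm{SLam}(1)$; $p\in\mathrm{SLam}(j), q\in\mathrm{SLam}(k)\Rightarrow p(q)\in\mathrm{SLam}(j+k)$; $p\in\mathrm{SLam}(i+1)\Rightarrow \lambda\_.p\in\mathrm{SLam}(i)$. A planar lambda term with ordered list of free variables $\Gamma$ decorating $p$, written $[\Gamma]t\in\Lambda_1^0(p)$, is defined by: $[x]x\in\Lambda_1^0(\_)$; from $[\Gamma]t\in\Lambda_1^0(p)$, $[\Delta]u\in\Lambda_1^0(q)$ infer $[\Gamma,\Delta]t(u)\in\Lambda_1^0(p(q))$; from $[x,\Gamma]t\in\Lambda_1^0(p)$ infer $[\Gamma]\lambda x.t\in\Lambda_1^0(\lambda\_.p)$; terms are considered modulo renaming of variables. Colorings: $\mathrm{SNeu}(i)$ (blue) and $\mathrm{SNF}(i)$ (red) are defined by rules (v) $\_\in\mathrm{SNeu}(1)$; (a) $p\in\mathrm{SNeu}(j)$, $q\in\mathrm{SNF}(k)\Rightarrow p(q)\in\mathrm{SNeu}(j+k)$; (s) $p\in\mathrm{SNeu}(i)\Rightarrow p\in\mathrm{SNF}(i)$; ($\ell$) $p\in\mathrm{SNF}(i+1)\Rightarrow\lambda\_.p\in\mathrm{SNF}(i)$. A $B$-coloring (resp. $R$-coloring) of a term is a derivation of its skeleton in $\mathrm{SNeu}$ (resp. $\mathrm{SNF}$); neutral/normal terms are those having one. The size $|\pi|$ of a coloring $\pi$ is the number of uses of rule (s). An NPT is a normal planar term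 $[x]t$ with exactly one free variable. Outer neutral handles: a neutral handle of a term is a decomposition of it as a context with one marked occurrence of a neutral subterm, written $C[\langle n\rangle]$. For a neutral or normal planar term $[\Gamma]t$ with coloring $\pi$, the ordered list $\mathrm{ONH}(\pi)$ is defined by induction: if $\pi$ is rule (v) for $[x]x$, $\mathrm{ONH}(\pi)=(\langle x\rangle)$; if $\pi$ ends with rule (a) deriving $[\Gamma,\Delta]t(u)$ from a $B$-coloring $\pi_1$ of $[\Gamma]t$ and an $R$-coloring $\pi_2$ of $[\Delta]u$, then $\mathrm{ONH}(\pi)$ is $\langle t(u)\rangle$, followed by $t(H)$ for each $H$ in $\mathrm{ONH}(\pi_2)$ in order, followed — only when $\Delta$ is empty — by $H(u)$ for each $H$ in $\mathrm{ONH}(\pi_1)$ in order; if $\pi$ ends with rule (s) applied to $\pi_1$, $\mathrm{ONH}(\pi)=\mathrm{ONH}(\pi_1)$; if $\pi$ ends with rule ($\ell$) deriving $[\Gamma]\lambda x.t$ from $\pi_1$ for $[x,\Gamma]t$, $\mathrm{ONH}(\pi)$ is $\lambda x.H$ for each $H$ in $\mathrm{ONH}(\pi_1)$ in order. $|\mathrm{ONH}(\pi)|$ is its length. Operations: $\mathrm{FO}([x_1]t_1,[x_2]t_2)$ is the NPT $[x_1]t_1'$ where $t_1'$ is obtained from $t_1$ by replacing the unique occurrence of $x_1$ by $x_1(\lambda x_2.t_2)$. For an NPT $[x_1]t_1$ with $R$-coloring $\pi_1$ and $1\le k\le|\mathrm{ONH}(\pi_1)|$, if the $k$-th element of $\mathrm{ONH}(\pi_1)$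 is $t_1 = C[\langle n\rangle]$, then $\mathrm{VO}_k([x_1]t_1)$ is the NPT $[x]\lambda x_1.C[n(x)]$ for a fresh variable $x$. *)

theory Defs
  imports Main
begin

datatype skel = SHole | SApp skel skel | SLam skel

inductive slam :: "skel \<Rightarrow> nat \<Rightarrow> bool" where
  sl_hole: "slam SHole 1"
| sl_app: "slam p j \<Longrightarrow> slam q k \<Longrightarrow> slam (SApp p q) (j + k)"
| sl_lam: "slam p (Suc i) \<Longrightarrow> slam (SLam p) i"

(* Lambda terms modulo renaming: de Bruijn indices.  A free index i (i.e. i >= binder
   depth d) denotes the (i - d)-th variable (0-based) of the ordered context Gamma. *)
datatype dbterm = Var nat | App dbterm dbterm | Lam dbterm

fun dlift :: "nat \<Rightarrow> nat \<Rightarrow> dbterm \<Rightarrow> dbterm" where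
  "dlift k c (Var i) = Var (if i < c then i else i + k)"
| "dlift k c (App t u) = App (dlift k c t) (dlift k c u)"
| "dlift k c (Lam t) = Lam (dlift k (Suc c) t)"

(* planar n t p : [Gamma]t decorates p, with |Gamma| = n.
   [x]x; [Gamma,Delta] t(u) (indices of u shifted past Gamma); [Gamma] \<lambda>x.t from [x,Gamma]t *)
inductive planar :: "nat \<Rightarrow> dbterm \<Rightarrow> skel \<Rightarrow> bool" where
  pl_var: "planar 1 (Var 0) SHole"
| pl_app: "planar j t p \<Longrightarrow> planar k u q \<Longrightarrow> planar (j + k) (App t (dlift j 0 u)) (SApp p q)"
| pl_lam: "planar (Suc i) t p \<Longrightarrow> planar i (Lam t) (SLam p)"

datatype coloring = CV | CA coloring coloring | CS coloring | CL coloring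

inductive sneu :: "coloring \<Rightarrow> skel \<Rightarrow> nat \<Rightarrow> bool"
  and snf :: "coloring \<Rightarrow> skel \<Rightarrow> nat \<Rightarrow> bool" where
  c_v: "sneu CV SHole 1"
| c_a: "sneu \<pi>1 p j \<Longrightarrow> snf \<pi>2 q k \<Longrightarrow> sneu (CA \<pi>1 \<pi>2) (SApp p q) (j + k)"
| c_s: "sneu \<pi> p i \<Longrightarrow> snf (CS \<pi>) p i"
| c_l: "snf \<pi> p (Suc i) \<Longrightarrow> snf (CL \<pi>) (SLam p) i"

definition bcoloring :: "nat \<Rightarrow> dbterm \<Rightarrow> coloring \<Rightarrow> bool" where
  "bcoloring n t \<pi> \<longleftrightarrow> (\<exists>p. planar n t p \<and> sneu \<pi> p n)"

definition rcoloring :: "nat \<Rightarrow> dbterm \<Rightarrow> coloring \<Rightarrow> bool" where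
  "rcoloring n t \<pi> \<longleftrightarrow> (\<exists>p. planar n t p \<and> snf \<pi> p n)"

definition npt :: "dbterm \<Rightarrow> bool" where
  "npt t \<longleftrightarrow> (\<exists>\<pi>. rcoloring 1 t \<pi>)"

fun csize :: "coloring \<Rightarrow> nat" where
  "csize CV = 0"
| "csize (CA a b) = csize a + csize b"
| "csize (CS a) = Suc (csize a)"
| "csize (CL a) = csize a"

(* grade of the skeleton derived by a coloring (= number of free variables) *)
fun cgrade :: "coloring \<Rightarrow> int" where
  "cgrade CV = 1"
| "cgrade (CA a b) = cgrade a + cgrade b"
| "cgrade (CS a) = cgrade a"
| "cgrade (CL a) = cgrade a - 1"

(* handles C[<n>] represented by the path from the root to the marked subterm *)
datatype dir = DL | DR | DB

fun onh :: "coloring \<Rightarrow> dir list list" where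
  "onh CV = [[]]"
| "onh (CA a b) = [] # map ((#) DR) (onh b) @ (if cgrade b = 0 then map ((#) DL) (onh a) else [])"
| "onh (CS a) = onh a"
| "onh (CL a) = map ((#) DB) (onh a)"

(* FO: replace the occurrence of x1 (free index 0) by x1(\<lambda>x2.t2) *)
fun fo_at :: "nat \<Rightarrow> dbterm \<Rightarrow> dbterm \<Rightarrow> dbterm" where
  "fo_at d s (Var i) = (if i = d then App (Var i) (dlift d 0 s) else Var i)"
| "fo_at d s (App t u) = App (fo_at d s t) (fo_at d s u)"
| "fo_at d s (Lam t) = Lam (fo_at (Suc d) s t)"

definition FO :: "dbterm \<Rightarrow> dbterm \<Rightarrow> dbterm" where
  "FO t1 t2 = fo_at 0 (Lam t2) t1"

(* plug d path t: replace the subterm n at path by n(x), where x is the new free variable;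
   d counts the binders of t above the current position; the whole result sits below \<lambda>x1 *)
fun plug :: "nat \<Rightarrow> dir list \<Rightarrow> dbterm \<Rightarrow> dbterm" where
  "plug d [] n = App n (Var (Suc d))"
| "plug d (DL # ps) (App t u) = App (plug d ps t) u"
| "plug d (DR # ps) (App t u) = App t (plug d ps u)"
| "plug d (DB # ps) (Lam t) = Lam (plug (Suc d) ps t)"
| "plug d ps t = t"

(* VO_k([x1]t1) w.r.t. the R-coloring pi1, with k 1-based *)
definition VO :: "nat \<Rightarrow> coloring \<Rightarrow> dbterm \<Rightarrow> dbterm" where
  "VO k \<pi>1 t1 = Lam (plug 0 (onh \<pi>1 ! (k - 1)) t1)"

end

theory Submission
  imports Defs
begin

(* A term with an R- or B-coloring and n \<ge> 1 free variables decomposes with respect to its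
   last free variable x\<^sub>n: it is the identity, or x\<^sub>n is the argument of a neutral
   handle of a term with n - 1 variables (a generalised VO), or x\<^sub>n heads an application
   x\<^sub>n(\<lambda>y. t\<^sub>2) with t\<^sub>2 an NPT (a generalised FO).
   The theorem is the case n = 1, reached directly for colorings ending in (s) and below one
   \<lambda> for those ending in (l).  The cases are exclusive because after an FO the
   variable x occurs in head position of an application, whereas a VO only uses x as an
   argument. *)

fun closed_below :: "nat \<Rightarrow> dbterm \<Rightarrow> bool" where
  "closed_below n (Var i) = (i < n)"
| "closed_below n (App t u) = (closed_below n t \<and> closed_below n u)"
| "closed_below n (Lam t) = closed_below (Suc n) t"

fun occurs :: "nat \<Rightarrow> dbterm \<Rightarrow> bool" where
  "occurs i (Var j) = (j = i)"
| "occurs i (App t u) = (occurs i t \<or> occurs i u)"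
| "occurs i (Lam t) = occurs (Suc i) t"

fun var_applied :: "nat \<Rightarrow> dbterm \<Rightarrow> bool" where
  "var_applied i (Var j) = False"
| "var_applied i (App t u) = (t = Var i \<or> var_applied i t \<or> var_applied i u)"
| "var_applied i (Lam t) = var_applied (Suc i) t"

fun plug_var :: "nat \<Rightarrow> dir list \<Rightarrow> dbterm \<Rightarrow> dbterm" where
  "plug_var m [] n = App n (Var m)"
| "plug_var m (DL # ps) (App t u) = App (plug_var m ps t) u"
| "plug_var m (DR # ps) (App t u) = App t (plug_var m ps u)"
| "plug_var m (DB # ps) (Lam t) = Lam (plug_var (Suc m) ps t)"
| "plug_var m ps t = t"

fun skel_grade :: "skel \<Rightarrow> int" where
  "skel_grade SHole = 1"
| "skel_grade (SApp p q) = skel_grade p + skel_grade q"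
| "skel_grade (SLam p) = skel_grade p - 1"

lemma plug_eq_plug_var: "plug d ps t = plug_var (Suc d) ps t"
  by (induction d ps t rule: plug.induct) auto

lemma dlift_0 [simp]: "dlift 0 c u = u"
  by (induction u arbitrary: c) auto

lemma dlift_closed_below: "closed_below n u \<Longrightarrow> n \<le> c \<Longrightarrow> dlift j c u = u"
  by (induction u arbitrary: n c) auto

lemma closed_below_dlift: "closed_below n u \<Longrightarrow> closed_below (n + j) (dlift j c u)"
  by (induction u arbitrary: n c) (auto, metis add_Suc)

lemma closed_below_mono: "closed_below n u \<Longrightarrow> n \<le> m \<Longrightarrow> closed_below m u"
  by (induction u arbitrary: n m) auto

lemma occurs_dlift: "occurs i u \<Longrightarrow> c \<le> i \<Longrightarrow> occurs (i + j) (dlift j c u)"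
  by (induction u arbitrary: i c) (auto, metis Suc_le_mono add_Suc)

lemma fo_at_closed_below: "closed_below n t \<Longrightarrow> n \<le> d \<Longrightarrow> fo_at d s t = t"
  by (induction t arbitrary: n d) auto

lemma dlift_fo_at:
  "closed_below 0 s \<Longrightarrow> c \<le> d \<Longrightarrow> dlift j c (fo_at d s u) = fo_at (d + j) s (dlift j c u)"
  by (induction u arbitrary: c d) (auto simp: dlift_closed_below)

lemma dlift_plug_var: "c \<le> m \<Longrightarrow> dlift j c (plug_var m ps t) = plug_var (m + j) ps (dlift j c t)"
  by (induction m ps t arbitrary: c rule: plug_var.induct) auto

lemma fo_at_neq_Var: "fo_at d s t \<noteq> Var d"
  by (induction t arbitrary: d) auto

lemma var_applied_fo_at: "occurs i t \<Longrightarrow> var_applied i (fo_at i s t)"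
  by (induction t arbitrary: i) auto

lemma closed_below_not_var_applied: "closed_below n t \<Longrightarrow> n \<le> i \<Longrightarrow> \<not> var_applied i t"
  by (induction t arbitrary: n i) auto

lemma plug_var_neq_Var: "closed_below m t \<Longrightarrow> plug_var m ps t \<noteq> Var m"
  by (induction m ps t rule: plug_var.induct) auto

lemma plug_var_not_var_applied: "closed_below m t \<Longrightarrow> \<not> var_applied m (plug_var m ps t)"
  by (induction m ps t rule: plug_var.induct)
    (auto dest: closed_below_not_var_applied plug_var_neq_Var)

lemma planar_closed_below: "planar n t p \<Longrightarrow> closed_below n t"
proof (induction rule: planar.induct)
  case (pl_app j t p k u q)
  then show ?case
    using closed_below_dlift[of k u j 0] closed_below_mono[of j t "j + k"] by (auto simp: add.commute)
qed auto

lemma planar_occurs: "planar n t p \<Longrightarrow> i < n \<Longrightarrow> occurs i t"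
proof (induction arbitrary: i rule: planar.induct)
  case (pl_app j t p k u q)
  show ?case
  proof (cases "i < j")
    case False
    with pl_app have "occurs (i - j) u" by auto
    from occurs_dlift[OF this, of 0 j] False show ?thesis by auto
  qed (use pl_app in auto)
qed auto

lemma planar_skel_grade: "planar n t p \<Longrightarrow> skel_grade p = int n"
  by (induction rule: planar.induct) auto

lemma coloring_grade:
  shows "sneu a p n \<Longrightarrow> skel_grade p = int n \<and> cgrade a = int n \<and> 1 \<le> n"
    and "snf b p n \<Longrightarrow> skel_grade p = int n \<and> cgrade b = int n"
  by (induction rule: sneu_snf.inducts) auto

lemma planar_sneu_grade: "planar m t p \<Longrightarrow> sneu a p n \<Longrightarrow> m = n"
  using planar_skel_grade coloring_grade(1) by fastforce

lemma onh_neq_Nil: "onh a \<noteq> []"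
  by (induction a) auto

lemma sneu_onh_hd: "sneu a p n \<Longrightarrow> onh a ! 0 = []"
  by (cases rule: sneu.cases) auto

inductive_cases planar_SHoleE: "planar n t SHole"
inductive_cases planar_SAppE: "planar n t (SApp p q)"
inductive_cases planar_SLamE: "planar n t (SLam p)"

lemma snf_closed_cases:
  assumes "snf a q 0" and "planar 0 u q"
  obtains b u' where "a = CL b" and "u = Lam u'" and "rcoloring 1 u' b"
  using assms(1)
proof (cases rule: snf.cases)
  case (c_s a')
  then show ?thesis using coloring_grade(1)[of a' q 0] by simp
next
  case (c_l b q')
  with assms(2) obtain u' where "u = Lam u'" "planar 1 u' q'" by (auto elim: planar_SLamE)
  with c_l that show ?thesis unfolding rcoloring_def by auto
qed

(* The generalised VO and FO on terms [x\<^sub>1, ..., x\<^sub>n]t colored by a in col, both acting on the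
   last variable x\<^sub>n (de Bruijn index n - 1): t plugs x\<^sub>n into the k-th outer neutral handle
   of a term with n - 1 variables, resp. t replaces x\<^sub>n by x\<^sub>n(\<lambda>y. t\<^sub>2) for an NPT [y]t\<^sub>2. *)
definition vo_decomp :: "(coloring \<Rightarrow> skel \<Rightarrow> nat \<Rightarrow> bool) \<Rightarrow> coloring \<Rightarrow> dbterm \<Rightarrow> nat \<Rightarrow> bool" where
  "vo_decomp col a t n \<longleftrightarrow> (\<exists>t1 a1 p1 k. planar (n - 1) t1 p1 \<and> col a1 p1 (n - 1) \<and>
     1 \<le> k \<and> k \<le> length (onh a1) \<and> t = plug_var (n - 1) (onh a1 ! (k - 1)) t1 \<and>
     csize a = 1 + csize a1 \<and> length (onh a) = k + 1)"

definition fo_decomp :: "(coloring \<Rightarrow> skel \<Rightarrow> nat \<Rightarrow> bool) \<Rightarrow> coloring \<Rightarrow> dbterm \<Rightarrow> nat \<Rightarrow> bool" where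
  "fo_decomp col a t n \<longleftrightarrow> (\<exists>t1 a1 p1 t2 b2. planar n t1 p1 \<and> col a1 p1 n \<and> rcoloring 1 t2 b2 \<and>
     t = fo_at (n - 1) (Lam t2) t1 \<and> csize a = csize a1 + csize b2 \<and>
     length (onh a) = 1 + length (onh a1) + length (onh b2))"

lemma vo_decomp_CS: "vo_decomp sneu a t n \<Longrightarrow> vo_decomp snf (CS a) t n"
  unfolding vo_decomp_def by (fastforce intro: c_s)

lemma fo_decomp_CS: "fo_decomp sneu a t n \<Longrightarrow> fo_decomp snf (CS a) t n"
  unfolding fo_decomp_def by (fastforce intro: c_s)

lemma vo_decomp_CL:
  assumes "vo_decomp snf b t (Suc i)" and "1 \<le> i"
  shows "vo_decomp snf (CL b) (Lam t) i"
proof -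
  from assms(1) obtain t1 a1 p1 k where dec: "planar i t1 p1" "snf a1 p1 i" "1 \<le> k"
    "k \<le> length (onh a1)" "t = plug_var i (onh a1 ! (k - 1)) t1"
    "csize b = 1 + csize a1" "length (onh b) = k + 1"
    unfolding vo_decomp_def by auto
  have i: "i = Suc (i - 1)" using assms(2) by simp
  have "planar (i - 1) (Lam t1) (SLam p1)" "snf (CL a1) (SLam p1) (i - 1)"
    using dec(1,2) i by (metis pl_lam, metis c_l)
  moreover have "onh (CL a1) ! (k - 1) = DB # onh a1 ! (k - 1)"
    using dec(3,4) by simp
  then have "Lam t = plug_var (i - 1) (onh (CL a1) ! (k - 1)) (Lam t1)"
    using dec(5) i by simp
  ultimately show ?thesis
    unfolding vo_decomp_def using dec(3,4,6,7) by fastforce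
qed

lemma fo_decomp_CL:
  assumes "fo_decomp snf b t (Suc i)" and "1 \<le> i"
  shows "fo_decomp snf (CL b) (Lam t) i"
proof -
  from assms(1) obtain t1 a1 p1 t2 b2 where dec: "planar (Suc i) t1 p1" "snf a1 p1 (Suc i)"
    "rcoloring 1 t2 b2" "t = fo_at i (Lam t2) t1" "csize b = csize a1 + csize b2"
    "length (onh b) = 1 + length (onh a1) + length (onh b2)"
    unfolding fo_decomp_def by auto
  have "planar i (Lam t1) (SLam p1)" "snf (CL a1) (SLam p1) i"
    using pl_lam[OF dec(1)] c_l[OF dec(2)] .
  moreover have "Lam t = fo_at (i - 1) (Lam t2) (Lam t1)"
    using dec(4) assms(2) by simp
  ultimately show ?thesis
    unfolding fo_decomp_def using dec(3,5,6) by fastforce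
qed

lemma fo_decomp_app_abs:
  assumes "rcoloring 1 u b"
  shows "fo_decomp sneu (CA CV (CL b)) (App (Var 0) (Lam u)) 1"
proof -
  from assms obtain q where "planar 1 u q" "snf b q 1"
    unfolding rcoloring_def by auto
  then have "cgrade b = 1" using coloring_grade(2) by simp
  then have "length (onh (CA CV (CL b))) = 1 + length (onh CV) + length (onh b)"
    by simp
  moreover have "App (Var 0) (Lam u) = fo_at (1 - 1) (Lam u) (Var 0)"
    "csize (CA CV (CL b)) = csize CV + csize b"
    by simp_all
  ultimately show ?thesis
    unfolding fo_decomp_def using assms pl_var c_v by blast
qed

lemma vo_decomp_app_closed:
  assumes "vo_decomp sneu a t j" and "snf a2 q 0" and "planar 0 u q"
  shows "vo_decomp sneu (CA a a2) (App t u) j"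
proof -
  from assms(1) obtain t1 a1 p1 k where dec: "planar (j - 1) t1 p1" "sneu a1 p1 (j - 1)"
    "1 \<le> k" "k \<le> length (onh a1)" "t = plug_var (j - 1) (onh a1 ! (k - 1)) t1"
    "csize a = 1 + csize a1" "length (onh a) = k + 1"
    unfolding vo_decomp_def by auto
  have "dlift (j - 1) 0 u = u"
    using planar_closed_below[OF assms(3)] by (simp add: dlift_closed_below)
  then have "planar (j - 1) (App t1 u) (SApp p1 q)"
    using pl_app[OF dec(1) assms(3)] by simp
  moreover have "sneu (CA a1 a2) (SApp p1 q) (j - 1)"
    using c_a[OF dec(2) assms(2)] by simp
  moreover have "cgrade a2 = 0"
    using coloring_grade(2)[OF assms(2)] by simp
  then have "onh (CA a1 a2) ! (length (onh a2) + k) = DL # onh a1 ! (k - 1)"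
    using dec(3,4) by (simp add: nth_append)
  ultimately show ?thesis
    unfolding vo_decomp_def using dec \<open>cgrade a2 = 0\<close>
    by (intro exI[where x = "App t1 u"] exI[where x = "CA a1 a2"] exI[where x = "SApp p1 q"]
        exI[where x = "1 + length (onh a2) + k"]) simp
qed

lemma fo_decomp_app_closed:
  assumes "fo_decomp sneu a t j" and "snf a2 q 0" and "planar 0 u q"
  shows "fo_decomp sneu (CA a a2) (App t u) j"
proof -
  from assms(1) obtain t1 a1 p1 t2 b2 where dec: "planar j t1 p1" "sneu a1 p1 j"
    "rcoloring 1 t2 b2" "t = fo_at (j - 1) (Lam t2) t1" "csize a = csize a1 + csize b2"
    "length (onh a) = 1 + length (onh a1) + length (onh b2)"
    unfolding fo_decomp_def by auto
  have closed: "closed_below 0 u"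
    using planar_closed_below[OF assms(3)] .
  then have "planar j (App t1 u) (SApp p1 q)"
    using pl_app[OF dec(1) assms(3)] by (simp add: dlift_closed_below)
  moreover have "sneu (CA a1 a2) (SApp p1 q) j"
    using c_a[OF dec(2) assms(2)] by simp
  moreover have "App t u = fo_at (j - 1) (Lam t2) (App t1 u)"
    using dec(4) closed by (simp add: fo_at_closed_below)
  moreover have "cgrade a2 = 0"
    using coloring_grade(2)[OF assms(2)] by simp
  then have "csize (CA a a2) = csize (CA a1 a2) + csize b2"
    "length (onh (CA a a2)) = 1 + length (onh (CA a1 a2)) + length (onh b2)"
    using dec(5,6) by simp_all
  ultimately show ?thesis
    unfolding fo_decomp_def using dec(3) by blast
qed

lemma vo_decomp_app_var:
  assumes "sneu a p j" and "planar j t p"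
  shows "vo_decomp sneu (CA a (CS CV)) (App t (Var j)) (Suc j)"
  unfolding vo_decomp_def using assms sneu_onh_hd[OF assms(1)] onh_neq_Nil[of a]
  by (intro exI[where x = t] exI[where x = a] exI[where x = p] exI[where x = 1])
    (simp add: Suc_leI)

lemma vo_decomp_app_right:
  assumes "sneu a p j" and "planar j t p" and "snf b q k" and "vo_decomp snf b u k" and "1 \<le> k"
  shows "vo_decomp sneu (CA a b) (App t (dlift j 0 u)) (j + k)"
proof -
  from assms(4) obtain u1 b1 q1 m where dec: "planar (k - 1) u1 q1" "snf b1 q1 (k - 1)"
    "1 \<le> m" "m \<le> length (onh b1)" "u = plug_var (k - 1) (onh b1 ! (m - 1)) u1"
    "csize b = 1 + csize b1" "length (onh b) = m + 1"
    unfolding vo_decomp_def by auto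
  have "planar (j + k - 1) (App t (dlift j 0 u1)) (SApp p q1)"
    using pl_app[OF assms(2) dec(1)] assms(5) by simp
  moreover have "sneu (CA a b1) (SApp p q1) (j + k - 1)"
    using c_a[OF assms(1) dec(2)] assms(5) by simp
  moreover have "onh (CA a b1) ! m = DR # onh b1 ! (m - 1)"
    using dec(3,4) by (cases m) (auto simp: nth_append)
  then have "App t (dlift j 0 u) =
      plug_var (j + k - 1) (onh (CA a b1) ! (1 + m - 1)) (App t (dlift j 0 u1))"
    using dec(5) assms(5) dlift_plug_var[of 0 "k - 1" j] by (simp add: add.commute)
  moreover have "cgrade b = int k"
    using coloring_grade(2)[OF assms(3)] by simp
  ultimately show ?thesis
    unfolding vo_decomp_def using dec assms(5)
    by (intro exI[where x = "App t (dlift j 0 u1)"] exI[where x = "CA a b1"]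
        exI[where x = "SApp p q1"] exI[where x = "1 + m"]) simp
qed

lemma fo_decomp_app_right:
  assumes "sneu a p j" and "planar j t p" and "snf b q k" and "fo_decomp snf b u k" and "1 \<le> k"
  shows "fo_decomp sneu (CA a b) (App t (dlift j 0 u)) (j + k)"
proof -
  from assms(4) obtain u1 b1 q1 t2 b2 where dec: "planar k u1 q1" "snf b1 q1 k"
    "rcoloring 1 t2 b2" "u = fo_at (k - 1) (Lam t2) u1" "csize b = csize b1 + csize b2"
    "length (onh b) = 1 + length (onh b1) + length (onh b2)"
    unfolding fo_decomp_def by auto
  have "planar (j + k) (App t (dlift j 0 u1)) (SApp p q1)"
    using pl_app[OF assms(2) dec(1)] .
  moreover have "sneu (CA a b1) (SApp p q1) (j + k)"
    using c_a[OF assms(1) dec(2)] .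
  moreover have "closed_below 0 (Lam t2)"
    using dec(3) planar_closed_below unfolding rcoloring_def by fastforce
  then have "App t (dlift j 0 u) = fo_at (j + k - 1) (Lam t2) (App t (dlift j 0 u1))"
    using dec(4) assms(5) dlift_fo_at[of "Lam t2" 0 "k - 1" j u1]
      fo_at_closed_below[OF planar_closed_below[OF assms(2)], of "j + k - 1"]
    by (simp add: add.commute)
  moreover have "cgrade b = int k" "cgrade b1 = int k"
    using coloring_grade(2)[OF assms(3)] coloring_grade(2)[OF dec(2)] by simp_all
  then have "csize (CA a b) = csize (CA a b1) + csize b2"
    "length (onh (CA a b)) = 1 + length (onh (CA a b1)) + length (onh b2)"
    using dec(5,6) assms(5) by simp_all
  ultimately show ?thesis
    unfolding fo_decomp_def using dec(3) by blast
qed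

lemma coloring_decomposition:
  shows "sneu a p n \<Longrightarrow> planar n t p \<Longrightarrow>
           (n = 1 \<and> t = Var 0 \<and> a = CV) \<or> vo_decomp sneu a t n \<or> fo_decomp sneu a t n"
    and "snf b p n \<Longrightarrow> planar n t p \<Longrightarrow> 1 \<le> n \<Longrightarrow>
           (n = 1 \<and> t = Var 0 \<and> b = CS CV) \<or> vo_decomp snf b t n \<or> fo_decomp snf b t n"
proof (induction arbitrary: t and t rule: sneu_snf.inducts)
  case c_v
  then show ?case by (auto elim: planar_SHoleE)
next
  case (c_s a p i)
  then show ?case using vo_decomp_CS fo_decomp_CS by blast
next
  case (c_l b p i)
  from c_l.prems(1) obtain t0 where t: "t = Lam t0" and t0: "planar (Suc i) t0 p"
    by (auto elim: planar_SLamE)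
  have "vo_decomp snf b t0 (Suc i) \<or> fo_decomp snf b t0 (Suc i)"
    using c_l.IH[OF t0] c_l.prems(2) by auto
  then show ?case using t c_l.prems(2) vo_decomp_CL fo_decomp_CL by blast
next
  case (c_a a p j b q k)
  from c_a.prems obtain ta u j' where t: "t = App ta (dlift j' 0 u)"
    and ta: "planar j' ta p" and u: "planar (j + k - j') u q"
    by (auto elim: planar_SAppE)
  have "j' = j" using planar_sneu_grade[OF ta c_a.hyps(1)] .
  with t ta u have t: "t = App ta (dlift j 0 u)" and ta: "planar j ta p" and u: "planar k u q"
    by simp_all
  show ?case
  proof (cases "k = 0")
    case True
    with c_a.hyps(2) u obtain b' u' where b: "b = CL b'" and u': "u = Lam u'" and "rcoloring 1 u' b'"
      by (auto elim: snf_closed_cases)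
    moreover have "dlift j 0 u = u"
      using planar_closed_below[OF u] True by (simp add: dlift_closed_below)
    ultimately show ?thesis
      using c_a.IH(1)[OF ta] c_a.hyps(2) u t True
        fo_decomp_app_abs vo_decomp_app_closed fo_decomp_app_closed by auto
  next
    case False
    then show ?thesis
      using c_a.IH(2)[OF u] c_a.hyps u t ta
        vo_decomp_app_var vo_decomp_app_right fo_decomp_app_right by auto
  qed
qed

definition FO_decomposition :: "dbterm \<Rightarrow> coloring \<Rightarrow> bool" where
  "FO_decomposition t \<pi> \<longleftrightarrow> (\<exists>t1 \<pi>1 t2 \<pi>2. rcoloring 1 t1 \<pi>1 \<and> rcoloring 1 t2 \<pi>2 \<and> t = FO t1 t2 \<and>
     csize \<pi> = csize \<pi>1 + csize \<pi>2 \<and> length (onh \<pi>) = 1 + length (onh \<pi>1) + length (onh \<pi>2))"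

definition VO_decomposition :: "dbterm \<Rightarrow> coloring \<Rightarrow> bool" where
  "VO_decomposition t \<pi> \<longleftrightarrow> (\<exists>t1 \<pi>1 k. rcoloring 1 t1 \<pi>1 \<and> 1 \<le> k \<and> k \<le> length (onh \<pi>1) \<and>
     t = VO k \<pi>1 t1 \<and> csize \<pi> = 1 + csize \<pi>1 \<and> length (onh \<pi>) = k + 1)"

lemma FO_decomposition_if_fo_decomp: "fo_decomp snf \<pi> t 1 \<Longrightarrow> FO_decomposition t \<pi>"
  unfolding fo_decomp_def FO_decomposition_def rcoloring_def FO_def by fastforce

lemma VO_decomposition_if_vo_decomp: "vo_decomp snf b t 2 \<Longrightarrow> VO_decomposition (Lam t) (CL b)"
  unfolding vo_decomp_def VO_decomposition_def rcoloring_def VO_def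
  by (auto simp: plug_eq_plug_var)

lemma npt_trichotomy:
  assumes "rcoloring 1 t \<pi>"
  shows "(t = Var 0 \<and> csize \<pi> = 1 \<and> length (onh \<pi>) = 1) \<or> FO_decomposition t \<pi> \<or> VO_decomposition t \<pi>"
proof -
  from assms obtain p where t: "planar 1 t p" and \<pi>: "snf \<pi> p 1"
    unfolding rcoloring_def by auto
  from \<pi> show ?thesis
  proof (cases rule: snf.cases)
    case (c_s a)
    have "\<not> vo_decomp sneu a t 1"
      unfolding vo_decomp_def using coloring_grade(1)[of _ _ 0] by auto
    then show ?thesis
      using coloring_decomposition(1)[OF c_s(2) t] c_s(1)
        fo_decomp_CS FO_decomposition_if_fo_decomp by auto
  next
    case (c_l b p')
    with t obtain t' where "t = Lam t'" and "planar (Suc 1) t' p'"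
      by (auto elim: planar_SLamE)
    then show ?thesis
      using coloring_decomposition(2)[of b p' "Suc 1" t'] c_l
        fo_decomp_CL FO_decomposition_if_fo_decomp VO_decomposition_if_vo_decomp
      by (auto simp: numeral_2_eq_2)
  qed
qed

lemma FO_neq_VO:
  assumes "planar 1 t1 p1" and "planar 1 t1' p1'"
  shows "FO t1 t2 \<noteq> VO k \<pi>1 t1'"
proof -
  have "var_applied 0 (FO t1 t2)"
    unfolding FO_def using var_applied_fo_at planar_occurs[OF assms(1)] by simp
  moreover have "\<not> var_applied 0 (VO k \<pi>1 t1')"
    unfolding VO_def using plug_var_not_var_applied planar_closed_below[OF assms(2)]
    by (simp add: plug_eq_plug_var)
  ultimately show ?thesis by metis
qed

theorem theorem4p12:
  assumes "rcoloring 1 t \<pi>"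
  shows "let A = (t = Var 0 \<and> csize \<pi> = 1 \<and> length (onh \<pi>) = 1);
             B = (\<exists>t1 \<pi>1 t2 \<pi>2. rcoloring 1 t1 \<pi>1 \<and> rcoloring 1 t2 \<pi>2 \<and> t = FO t1 t2 \<and>
                    csize \<pi> = csize \<pi>1 + csize \<pi>2 \<and>
                    length (onh \<pi>) = 1 + length (onh \<pi>1) + length (onh \<pi>2));
             C = (\<exists>t1 \<pi>1 k. rcoloring 1 t1 \<pi>1 \<and> 1 \<le> k \<and> k \<le> length (onh \<pi>1) \<and>
                    t = VO k \<pi>1 t1 \<and> csize \<pi> = 1 + csize \<pi>1 \<and> length (onh \<pi>) = k + 1)
         in (A \<or> B \<or> C) \<and> \<not> (A \<and> B) \<and> \<not> (A \<and> C) \<and> \<not> (B \<and> C)"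
proof -
  have "\<not> (t = Var 0 \<and> FO_decomposition t \<pi>)"
    unfolding FO_decomposition_def FO_def using fo_at_neq_Var by metis
  moreover have "\<not> (t = Var 0 \<and> VO_decomposition t \<pi>)"
    unfolding VO_decomposition_def VO_def by auto
  moreover have "\<not> (FO_decomposition t \<pi> \<and> VO_decomposition t \<pi>)"
    unfolding FO_decomposition_def VO_decomposition_def rcoloring_def using FO_neq_VO by metis
  ultimately show ?thesis
    using npt_trichotomy[OF assms]
    unfolding Let_def FO_decomposition_def VO_decomposition_def by blast
qed

end
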